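(* Let $K=1$. For every reflection matrix $\mathbf\Phi$ for which (SDR1.2) has an optimal solution, problems (P1.1) and (P2.1) have the same optimal value. Consequently, when these subproblems attain their optima for all $\mathbf\Phi$, the joint problems (P1) and (P2) have the same optimal value, i.e. sensing-interference cancellation at the (single) user provides no gain.
   Context: Let $M,N\ge1$ be integers and $K=1$. Fixed data: $\mathbf G\in\mathbb C^{N\times M}$, $\mathbf h_{\mathrm d,1}\in\mathbb C^{M}$, $\mathbf h_{\mathrm r,1}\in\mathbb C^{N}$, threshold $\Gamma_1>0$, noise power $\sigma_1^2>0$, power budget $P_0>0$. A reflection matrix is $\mathbf\Phi=\mathrm{diag}(\mathbf v)$ with $\mathbf v\in\mathbb C^N$, $|v_n|=1$ for all $n$; put $\mathbf h_1=\mathbf h_{\mathrm d,1}+\mathbf G^H\mathbf\Phi^H\mathbf h_{\mathrm r,1}$ and $\mathbf H_1=\mathbf h_1\mathbf h_1^H$. For $\mathbf w_1\in\mathbb C^M$ and Hermitian $\mathbf R_0\succeq\mathbf 0$: Type-I SINR $\gamma_1^{\mathrm I}=|\mathbf h_1^H\mathbf w_1|^2/(\mathbf h_1^H\mathbf R_0\mathbf h_1+\sigma_1^2)$, Type-II SINR $\gamma_1^{\mathrm{II}}=|\mathbf h_1^H\mathbf w_1|^2/\sigma_1^2$. For Hermitian $\mathbf X\succeq\mathbf 0$ define $f(\mathbf X)=\mathrm{tr}\big((\mathbf G\mathbf X\mathbf G^H)^{-1}\big)$ if $\mathbf G\mathbf X\mathbf G^H$ is invertible and $+\infty$ otherwise.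 Problem (P1.1) (resp. (P2.1)), for fixed $\mathbf\Phi$: minimize $f(\mathbf w_1\mathbf w_1^H+\mathbf R_0)$ over $\mathbf w_1,\mathbf R_0\succeq\mathbf 0$ subject to $\gamma_1^{\mathrm I}\ge\Gamma_1$ (resp. $\gamma_1^{\mathrm{II}}\ge\Gamma_1$) and $\|\mathbf w_1\|^2+\mathrm{tr}(\mathbf R_0)\le P_0$. Problems (P1) and (P2) are the same minimizations carried out jointly over $\mathbf w_1,\mathbf R_0$ and all reflection matrices $\mathbf\Phi$. Problem (SDR1.2): minimize $f(\mathbf W_1+\mathbf R_0)$ over Hermitian $\mathbf W_1\succeq\mathbf 0,\mathbf R_0\succeq\mathbf 0$ subject to $(1+\tfrac1{\Gamma_1})\mathrm{tr}(\mathbf H_1\mathbf W_1)-\mathrm{tr}(\mathbf H_1(\mathbf W_1+\mathbf R_0))\ge\sigma_1^2$ and $\mathrm{tr}(\mathbf W_1)+\mathrm{tr}(\mathbf R_0)\le P_0$. *)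

theory Defs
  imports "Jordan_Normal_Form.Schur_Decomposition" "Jordan_Normal_Form.Gauss_Jordan_Elimination"
    "HOL-Library.Extended_Real"
begin

definition trace_mat :: "complex mat \<Rightarrow> complex" where
  "trace_mat A = (\<Sum>i<dim_row A. A $$ (i,i))"

definition hermitian_mat :: "nat \<Rightarrow> complex mat \<Rightarrow> bool" where
  "hermitian_mat n A \<longleftrightarrow> A \<in> carrier_mat n n \<and> mat_adjoint A = A"

text \<open>Hermitian positive semidefinite: x^H A x >= 0 for all x (the form is real for Hermitian A).\<close>
definition psd_mat :: "nat \<Rightarrow> complex mat \<Rightarrow> bool" where
  "psd_mat n A \<longleftrightarrow> hermitian_mat n A \<and> (\<forall>x\<in>carrier_vec n. 0 \<le> Re ((A *\<^sub>v x) \<bullet>c x))"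

definition outer :: "complex vec \<Rightarrow> complex mat" where
  "outer w = mat (dim_vec w) (dim_vec w) (\<lambda>(i,j). w $ i * cnj (w $ j))"

definition sqnorm :: "complex vec \<Rightarrow> real" where
  "sqnorm w = (\<Sum>i<dim_vec w. (cmod (w $ i))\<^sup>2)"

definition crb :: "complex mat \<Rightarrow> complex mat \<Rightarrow> ereal" where
  "crb G X = (case mat_inverse (G * X * mat_adjoint G) of
                Some B \<Rightarrow> ereal (Re (trace_mat B))
              | None \<Rightarrow> \<infinity>)"

definition unimod :: "nat \<Rightarrow> complex vec \<Rightarrow> bool" where
  "unimod N v \<longleftrightarrow> v \<in> carrier_vec N \<and> (\<forall>n<N. cmod (v $ n) = 1)"

definition refl_mat :: "nat \<Rightarrow> complex vec \<Rightarrow> complex mat" where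
  "refl_mat N v = mat N N (\<lambda>(i,j). if i = j then v $ i else 0)"

definition chan :: "complex mat \<Rightarrow> complex vec \<Rightarrow> complex vec \<Rightarrow> complex mat \<Rightarrow> complex vec" where
  "chan G hdir hr Phi = hdir + mat_adjoint G *\<^sub>v (mat_adjoint Phi *\<^sub>v hr)"

text \<open>h^H w = w .c h ; h^H R h = (R h) .c h.\<close>
definition sinr1 :: "complex vec \<Rightarrow> complex vec \<Rightarrow> complex mat \<Rightarrow> real \<Rightarrow> real" where
  "sinr1 h w R sigma2 = (cmod (w \<bullet>c h))\<^sup>2 / (Re ((R *\<^sub>v h) \<bullet>c h) + sigma2)"

definition sinr2 :: "complex vec \<Rightarrow> complex vec \<Rightarrow> real \<Rightarrow> real" where
  "sinr2 h w sigma2 = (cmod (w \<bullet>c h))\<^sup>2 / sigma2"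

definition feas1 :: "nat \<Rightarrow> complex mat \<Rightarrow> complex vec \<Rightarrow> complex vec \<Rightarrow> real \<Rightarrow> real \<Rightarrow> real
    \<Rightarrow> complex mat \<Rightarrow> (complex vec \<times> complex mat) set" where
  "feas1 M G hdir hr Gam sigma2 P0 Phi =
     {(w, R). w \<in> carrier_vec M \<and> psd_mat M R
        \<and> sinr1 (chan G hdir hr Phi) w R sigma2 \<ge> Gam
        \<and> sqnorm w + Re (trace_mat R) \<le> P0}"

definition feas2 :: "nat \<Rightarrow> complex mat \<Rightarrow> complex vec \<Rightarrow> complex vec \<Rightarrow> real \<Rightarrow> real \<Rightarrow> real
    \<Rightarrow> complex mat \<Rightarrow> (complex vec \<times> complex mat) set" where
  "feas2 M G hdir hr Gam sigma2 P0 Phi =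
     {(w, R). w \<in> carrier_vec M \<and> psd_mat M R
        \<and> sinr2 (chan G hdir hr Phi) w sigma2 \<ge> Gam
        \<and> sqnorm w + Re (trace_mat R) \<le> P0}"

text \<open>Optimal values (infimum; +infinity if infeasible).\<close>
definition val_P11 where
  "val_P11 M G hdir hr Gam sigma2 P0 Phi =
     (INF p \<in> feas1 M G hdir hr Gam sigma2 P0 Phi. crb G (outer (fst p) + snd p))"

definition val_P21 where
  "val_P21 M G hdir hr Gam sigma2 P0 Phi =
     (INF p \<in> feas2 M G hdir hr Gam sigma2 P0 Phi. crb G (outer (fst p) + snd p))"

definition val_P1 where
  "val_P1 M N G hdir hr Gam sigma2 P0 =
     (INF p \<in> {(v, w, R). unimod N v \<and> (w, R) \<in> feas1 M G hdir hr Gam sigma2 P0 (refl_mat N v)}.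
        crb G (outer (fst (snd p)) + snd (snd p)))"

definition val_P2 where
  "val_P2 M N G hdir hr Gam sigma2 P0 =
     (INF p \<in> {(v, w, R). unimod N v \<and> (w, R) \<in> feas2 M G hdir hr Gam sigma2 P0 (refl_mat N v)}.
        crb G (outer (fst (snd p)) + snd (snd p)))"

definition feas_sdr :: "nat \<Rightarrow> complex mat \<Rightarrow> complex vec \<Rightarrow> complex vec \<Rightarrow> real \<Rightarrow> real \<Rightarrow> real
    \<Rightarrow> complex mat \<Rightarrow> (complex mat \<times> complex mat) set" where
  "feas_sdr M G hdir hr Gam sigma2 P0 Phi =
     (let H = outer (chan G hdir hr Phi) in
      {(W, R). psd_mat M W \<and> psd_mat M R
        \<and> (1 + 1 / Gam) * Re (trace_mat (H * W)) - Re (trace_mat (H * (W + R))) \<ge> sigma2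
        \<and> Re (trace_mat W) + Re (trace_mat R) \<le> P0})"

definition sdr_has_opt where
  "sdr_has_opt M G hdir hr Gam sigma2 P0 Phi \<longleftrightarrow>
     (\<exists>p \<in> feas_sdr M G hdir hr Gam sigma2 P0 Phi.
        \<forall>q \<in> feas_sdr M G hdir hr Gam sigma2 P0 Phi.
          crb G (fst p + snd p) \<le> crb G (fst q + snd q))"

end

theory Submission
  imports Defs
begin

text \<open>
  The objective depends on a feasible point (w, R) only through the covariance X = w w^H + R,
  and the power constraint only through tr X. Given a Type-II feasible point, put q = h^H X h;
  the beam w' = X h / sqrt q and R' = X - w' w'^H have the same covariance, R' is positive
  semidefinite by the Cauchy-Schwarz inequality for the form of X, and R' h = 0. Hence w' suffers
  no sensing interference and |h^H w'|^2 = q \<ge> |h^H w|^2, so (w', R') is Type-I feasible.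
  Both feasible sets therefore produce the same covariances and the same optimal values, for every
  reflection matrix.
\<close>

lemma mat_adjoint_carrier: "A \<in> carrier_mat n m \<Longrightarrow> mat_adjoint A \<in> carrier_mat m n"
  unfolding mat_adjoint_def by auto

lemma mat_adjoint_index:
  "A \<in> carrier_mat n m \<Longrightarrow> i < m \<Longrightarrow> j < n \<Longrightarrow> mat_adjoint A $$ (i,j) = cnj (A $$ (j,i))"
  unfolding mat_adjoint_def by (auto simp: mat_of_rows_def)

lemma hermitian_mat_iff_index:
  "hermitian_mat n A \<longleftrightarrow> A \<in> carrier_mat n n \<and> (\<forall>i<n. \<forall>j<n. A $$ (i,j) = cnj (A $$ (j,i)))"
proof
  assume "hermitian_mat n A"
  then have A: "A \<in> carrier_mat n n" and "mat_adjoint A = A"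
    unfolding hermitian_mat_def by auto
  then show "A \<in> carrier_mat n n \<and> (\<forall>i<n. \<forall>j<n. A $$ (i,j) = cnj (A $$ (j,i)))"
    using mat_adjoint_index[OF A] by metis
next
  assume A: "A \<in> carrier_mat n n \<and> (\<forall>i<n. \<forall>j<n. A $$ (i,j) = cnj (A $$ (j,i)))"
  then have Ac: "A \<in> carrier_mat n n" by blast
  have "mat_adjoint A = A"
  proof (rule eq_matI)
    fix i j assume "i < dim_row A" "j < dim_col A"
    then have ij: "i < n" "j < n" using Ac by auto
    have "A $$ (j,i) = cnj (A $$ (i,j))" using A ij by blast
    then show "mat_adjoint A $$ (i,j) = A $$ (i,j)"
      using mat_adjoint_index[OF Ac ij] by simp
  qed (use mat_adjoint_carrier[OF Ac] Ac in auto)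
  with Ac show "hermitian_mat n A"
    unfolding hermitian_mat_def by auto
qed

lemma hermitian_mat_add:
  assumes "hermitian_mat n A" "hermitian_mat n B"
  shows "hermitian_mat n (A + B)"
proof -
  have A: "A \<in> carrier_mat n n" "\<And>i j. i < n \<Longrightarrow> j < n \<Longrightarrow> A $$ (i,j) = cnj (A $$ (j,i))"
   and B: "B \<in> carrier_mat n n" "\<And>i j. i < n \<Longrightarrow> j < n \<Longrightarrow> B $$ (i,j) = cnj (B $$ (j,i))"
    using assms unfolding hermitian_mat_iff_index by blast+
  have "(A + B) $$ (i,j) = cnj ((A + B) $$ (j,i))" if "i < n" "j < n" for i j
    using A(1) B(1) A(2)[OF that] B(2)[OF that] that by simp
  moreover have "A + B \<in> carrier_mat n n"
    using A(1) B(1) by simp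
  ultimately show ?thesis
    unfolding hermitian_mat_iff_index by blast
qed

lemma hermitian_mat_minus:
  assumes "hermitian_mat n A" "hermitian_mat n B"
  shows "hermitian_mat n (A - B)"
proof -
  have A: "A \<in> carrier_mat n n" "\<And>i j. i < n \<Longrightarrow> j < n \<Longrightarrow> A $$ (i,j) = cnj (A $$ (j,i))"
   and B: "B \<in> carrier_mat n n" "\<And>i j. i < n \<Longrightarrow> j < n \<Longrightarrow> B $$ (i,j) = cnj (B $$ (j,i))"
    using assms unfolding hermitian_mat_iff_index by blast+
  have "(A - B) $$ (i,j) = cnj ((A - B) $$ (j,i))" if "i < n" "j < n" for i j
    using A(1) B(1) A(2)[OF that] B(2)[OF that] that by simp
  moreover have "A - B \<in> carrier_mat n n"
    using A(1) B(1) by (simp add: minus_carrier_mat)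
  ultimately show ?thesis
    unfolding hermitian_mat_iff_index by blast
qed

lemma outer_carrier: "w \<in> carrier_vec n \<Longrightarrow> outer w \<in> carrier_mat n n"
  unfolding outer_def by auto

lemma hermitian_mat_outer: "w \<in> carrier_vec n \<Longrightarrow> hermitian_mat n (outer w)"
  unfolding hermitian_mat_iff_index outer_def by (auto simp: mult.commute)

text \<open>\<open>sesq_form X x y\<close> is y^H X x; the quadratic forms in \<open>sinr1\<close> and \<open>psd_mat\<close> are its diagonal.\<close>

definition sesq_form :: "complex mat \<Rightarrow> complex vec \<Rightarrow> complex vec \<Rightarrow> complex" where
  "sesq_form X x y = (X *\<^sub>v x) \<bullet>c y"

lemma psd_mat_iff_sesq_form:
  "psd_mat n A \<longleftrightarrow> hermitian_mat n A \<and> (\<forall>x\<in>carrier_vec n. 0 \<le> Re (sesq_form A x x))"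
  unfolding psd_mat_def sesq_form_def by simp

lemma sesq_form_sum:
  assumes "X \<in> carrier_mat n n" "x \<in> carrier_vec n" "y \<in> carrier_vec n"
  shows "sesq_form X x y = (\<Sum>i<n. \<Sum>j<n. X $$ (i,j) * x $ j * cnj (y $ i))"
  using assms unfolding sesq_form_def scalar_prod_def
  by (auto simp: mult_mat_vec_def row_def sum_distrib_right lessThan_atLeast0 scalar_prod_def
      intro!: sum.cong)

lemma sesq_form_cnj_swap:
  assumes "hermitian_mat n X" "x \<in> carrier_vec n" "y \<in> carrier_vec n"
  shows "sesq_form X x y = cnj (sesq_form X y x)"
proof -
  have X: "X \<in> carrier_mat n n"
    using assms(1) unfolding hermitian_mat_def by auto
  have sym: "cnj (X $$ (i,j)) = X $$ (j,i)" if "i < n" "j < n" for i j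
    using assms(1) that unfolding hermitian_mat_iff_index by metis
  have "cnj (sesq_form X y x) = (\<Sum>i<n. \<Sum>j<n. X $$ (j,i) * x $ i * cnj (y $ j))"
    unfolding sesq_form_sum[OF X assms(3,2)] cnj_sum
    by (intro sum.cong refl) (simp add: sym mult.commute mult.left_commute)
  also have "\<dots> = sesq_form X x y"
    unfolding sesq_form_sum[OF X assms(2,3)] by (rule sum.swap)
  finally show ?thesis by simp
qed

lemma sesq_form_diag_real:
  assumes "hermitian_mat n X" "x \<in> carrier_vec n"
  shows "sesq_form X x x = of_real (Re (sesq_form X x x))"
  using sesq_form_cnj_swap[OF assms assms(2)] by (simp add: complex_eq_iff)

lemma sesq_form_add_mat:
  assumes "A \<in> carrier_mat n n" "B \<in> carrier_mat n n" "x \<in> carrier_vec n" "y \<in> carrier_vec n"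
  shows "sesq_form (A + B) x y = sesq_form A x y + sesq_form B x y"
  unfolding sesq_form_def
  by (subst add_mult_distrib_mat_vec[OF assms(1-3)], rule add_scalar_prod_distrib[of _ n])
    (use assms in auto)

lemma sesq_form_minus_mat:
  assumes "A \<in> carrier_mat n n" "B \<in> carrier_mat n n" "x \<in> carrier_vec n" "y \<in> carrier_vec n"
  shows "sesq_form (A - B) x y = sesq_form A x y - sesq_form B x y"
  unfolding sesq_form_def
  by (subst minus_mult_distrib_mat_vec[OF assms(1-3)], rule minus_scalar_prod_distrib[of _ n])
    (use assms in auto)

lemma sesq_form_affine_left:
  assumes "X \<in> carrier_mat n n" "a \<in> carrier_vec n" "b \<in> carrier_vec n" "y \<in> carrier_vec n"
  shows "sesq_form X (a - c \<cdot>\<^sub>v b) y = sesq_form X a y - c * sesq_form X b y"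
  unfolding sesq_form_def
  using assms
  by (simp add: mult_minus_distrib_mat_vec mult_mat_vec minus_scalar_prod_distrib[of _ n]
      smult_scalar_prod_distrib[of _ n])

lemma sesq_form_affine_right:
  assumes "hermitian_mat n X" "a \<in> carrier_vec n" "b \<in> carrier_vec n" "y \<in> carrier_vec n"
  shows "sesq_form X y (a - c \<cdot>\<^sub>v b) = sesq_form X y a - cnj c * sesq_form X y b"
proof -
  have X: "X \<in> carrier_mat n n"
    using assms(1) unfolding hermitian_mat_def by auto
  show ?thesis
    using assms sesq_form_affine_left[OF X assms(2-4), of c]
    by (simp add: sesq_form_cnj_swap[OF assms(1) assms(4)])
qed

lemma psd_sesq_form_Cauchy_Schwarz:
  assumes X: "psd_mat n X" and u: "u \<in> carrier_vec n" and v: "v \<in> carrier_vec n"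
    and q_pos: "Re (sesq_form X v v) > 0"
  shows "(cmod (sesq_form X v u))\<^sup>2 \<le> Re (sesq_form X u u) * Re (sesq_form X v v)"
proof -
  have H: "hermitian_mat n X" and nonneg: "\<And>z. z \<in> carrier_vec n \<Longrightarrow> 0 \<le> Re (sesq_form X z z)"
    using X unfolding psd_mat_iff_sesq_form by auto
  have Xc: "X \<in> carrier_mat n n"
    using H unfolding hermitian_mat_def by auto
  define q where "q = Re (sesq_form X v v)"
  define \<beta> where "\<beta> = sesq_form X v u"
  define t where "t = cnj \<beta> / complex_of_real q"
  define z where "z = u - t \<cdot>\<^sub>v v"
  have z: "z \<in> carrier_vec n"
    unfolding z_def using u v by auto
  have vv: "sesq_form X v v = of_real q"
    unfolding q_def by (rule sesq_form_diag_real[OF H v])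
  have uv: "sesq_form X u v = cnj \<beta>"
    unfolding \<beta>_def by (rule sesq_form_cnj_swap[OF H u v])
  have "sesq_form X z z = sesq_form X u z - t * sesq_form X v z"
    unfolding z_def by (rule sesq_form_affine_left[OF Xc u v z[unfolded z_def]])
  also have "\<dots> = sesq_form X u u - cnj t * cnj \<beta> - t * \<beta> + t * cnj t * of_real q"
    unfolding z_def sesq_form_affine_right[OF H u v u] sesq_form_affine_right[OF H u v v] uv vv \<beta>_def
    by (simp add: algebra_simps)
  \<comment> \<open>the choice of t makes the three correction terms equal to |\<beta>|^2 / q\<close>
  also have "\<dots> = sesq_form X u u - of_real ((cmod \<beta>)\<^sup>2 / q)"
  proof -
    have "\<beta> * cnj \<beta> = of_real ((cmod \<beta>)\<^sup>2)"
      by (metis complex_norm_square)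
    then show ?thesis
      using q_pos unfolding t_def q_def[symmetric] by (simp add: field_simps)
  qed
  finally have "0 \<le> Re (sesq_form X u u) - (cmod \<beta>)\<^sup>2 / q"
    using nonneg[OF z] by simp
  then show ?thesis
    using q_pos unfolding \<beta>_def q_def by (simp add: field_simps)
qed

lemma sesq_form_outer_diag:
  assumes "w \<in> carrier_vec n" "x \<in> carrier_vec n"
  shows "Re (sesq_form (outer w) x x) = (cmod (w \<bullet>c x))\<^sup>2"
proof -
  have "sesq_form (outer w) x x = (\<Sum>i<n. \<Sum>j<n. (w $ i * cnj (x $ i)) * (x $ j * cnj (w $ j)))"
    using sesq_form_sum[OF outer_carrier[OF assms(1)] assms(2,2)] assms(1)
    unfolding outer_def by (auto simp: ac_simps intro!: sum.cong)
  also have "\<dots> = (w \<bullet>c x) * cnj (w \<bullet>c x)"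
    using assms unfolding scalar_prod_def
    by (simp add: sum_product lessThan_atLeast0 cnj_sum mult.commute)
  finally show ?thesis
    by (simp add: complex_mult_cnj cmod_def)
qed

lemma sesq_form_outer_plus_diag:
  assumes "w \<in> carrier_vec n" "R \<in> carrier_mat n n" "x \<in> carrier_vec n"
  shows "Re (sesq_form (outer w + R) x x) = (cmod (w \<bullet>c x))\<^sup>2 + Re (sesq_form R x x)"
  using sesq_form_add_mat[OF outer_carrier assms(2,3,3)] sesq_form_outer_diag assms by simp

lemma trace_mat_add:
  assumes "A \<in> carrier_mat n n" "B \<in> carrier_mat n n"
  shows "trace_mat (A + B) = trace_mat A + trace_mat B"
  using assms unfolding trace_mat_def by (simp add: sum.distrib)

lemma power_eq_trace_covariance:
  assumes "w \<in> carrier_vec n" "R \<in> carrier_mat n n"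
  shows "sqnorm w + Re (trace_mat R) = Re (trace_mat (outer w + R))"
proof -
  have "sqnorm w = Re (trace_mat (outer w))"
    unfolding sqnorm_def trace_mat_def outer_def
    by (auto simp: complex_mult_cnj cmod_def intro!: sum.cong)
  then show ?thesis
    using trace_mat_add[OF outer_carrier assms(2)] assms(1) by simp
qed

lemma psd_rank_one_extraction:
  assumes X: "psd_mat n X" and h: "h \<in> carrier_vec n" and q_pos: "Re (sesq_form X h h) > 0"
  defines "w' \<equiv> complex_of_real (1 / sqrt (Re (sesq_form X h h))) \<cdot>\<^sub>v (X *\<^sub>v h)"
  shows "w' \<in> carrier_vec n" "psd_mat n (X - outer w')"
    "(cmod (w' \<bullet>c h))\<^sup>2 = Re (sesq_form X h h)" "Re (sesq_form (X - outer w') h h) = 0"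
proof -
  define q where "q = Re (sesq_form X h h)"
  have H: "hermitian_mat n X"
    using X unfolding psd_mat_iff_sesq_form by auto
  have Xc: "X \<in> carrier_mat n n"
    using H unfolding hermitian_mat_def by auto
  show w': "w' \<in> carrier_vec n"
    unfolding w'_def using Xc h by auto
  have gain: "(cmod (w' \<bullet>c x))\<^sup>2 = (cmod (sesq_form X h x))\<^sup>2 / q" if x: "x \<in> carrier_vec n" for x
  proof -
    have "w' \<bullet>c x = complex_of_real (1 / sqrt q) * sesq_form X h x"
      unfolding w'_def q_def sesq_form_def
      by (rule smult_scalar_prod_distrib[of _ n]) (use Xc h x in auto)
    then show ?thesis
      using q_pos unfolding q_def[symmetric] by (simp add: norm_divide power_divide)
  qed
  have rest: "Re (sesq_form (X - outer w') x x) = Re (sesq_form X x x) - (cmod (sesq_form X h x))\<^sup>2 / q"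
    if x: "x \<in> carrier_vec n" for x
    using sesq_form_minus_mat[OF Xc outer_carrier[OF w'] x x] sesq_form_outer_diag[OF w' x] gain[OF x]
    by simp
  have "0 \<le> Re (sesq_form (X - outer w') x x)" if x: "x \<in> carrier_vec n" for x
    using psd_sesq_form_Cauchy_Schwarz[OF X x h q_pos] q_pos
    unfolding rest[OF x] q_def[symmetric] by (simp add: field_simps)
  then show "psd_mat n (X - outer w')"
    unfolding psd_mat_iff_sesq_form
    using hermitian_mat_minus[OF H hermitian_mat_outer[OF w']] by auto
  have hh: "(cmod (sesq_form X h h))\<^sup>2 = q\<^sup>2"
    using sesq_form_diag_real[OF H h] unfolding q_def[symmetric] by (metis norm_of_real power2_abs)
  show "(cmod (w' \<bullet>c h))\<^sup>2 = Re (sesq_form X h h)"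
    using gain[OF h] q_pos unfolding hh q_def[symmetric] by (simp add: power2_eq_square)
  show "Re (sesq_form (X - outer w') h h) = 0"
    using rest[OF h] q_pos unfolding hh q_def[symmetric] by (simp add: power2_eq_square)
qed

lemma interference_free_reallocation:
  assumes h: "h \<in> carrier_vec M" and w: "w \<in> carrier_vec M" and R: "psd_mat M R"
    and sigma2: "sigma2 > 0" and Gam: "Gam > 0" and sinr: "sinr2 h w sigma2 \<ge> Gam"
  shows "\<exists>w' R'. w' \<in> carrier_vec M \<and> psd_mat M R' \<and> sinr1 h w' R' sigma2 \<ge> Gam
    \<and> outer w' + R' = outer w + R"
proof -
  define X where "X = outer w + R"
  have HR: "hermitian_mat M R" and R_nonneg: "\<And>x. x \<in> carrier_vec M \<Longrightarrow> 0 \<le> Re (sesq_form R x x)"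
    using R unfolding psd_mat_iff_sesq_form by auto
  have Rc: "R \<in> carrier_mat M M"
    using HR unfolding hermitian_mat_def by auto
  have X_form: "Re (sesq_form X x x) = (cmod (w \<bullet>c x))\<^sup>2 + Re (sesq_form R x x)"
    if "x \<in> carrier_vec M" for x
    unfolding X_def by (rule sesq_form_outer_plus_diag[OF w Rc that])
  have X: "psd_mat M X"
    unfolding psd_mat_iff_sesq_form X_def[symmetric]
    using hermitian_mat_add[OF hermitian_mat_outer[OF w] HR] X_form R_nonneg
    by (simp add: X_def add_nonneg_nonneg)
  define q where "q = Re (sesq_form X h h)"
  have gain: "(cmod (w \<bullet>c h))\<^sup>2 \<le> q"
    unfolding q_def X_form[OF h] using R_nonneg[OF h] by simp
  have "Gam * sigma2 \<le> (cmod (w \<bullet>c h))\<^sup>2"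
    using sinr sigma2 unfolding sinr2_def by (simp add: field_simps)
  then have q_pos: "q > 0"
    using gain Gam sigma2 by (smt (verit) mult_pos_pos)
  define w' where "w' = complex_of_real (1 / sqrt q) \<cdot>\<^sub>v (X *\<^sub>v h)"
  note extraction = psd_rank_one_extraction[OF X h q_pos[unfolded q_def], folded q_def, folded w'_def]
  define R' where "R' = X - outer w'"
  have "sinr1 h w' R' sigma2 = q / sigma2"
    using extraction(3,4) unfolding sinr1_def R'_def sesq_form_def by simp
  also have "\<dots> \<ge> sinr2 h w sigma2"
    unfolding sinr2_def using gain sigma2 by (simp add: divide_right_mono)
  finally have "sinr1 h w' R' sigma2 \<ge> Gam"
    using sinr by linarith
  moreover have "outer w' + R' = X"
    unfolding R'_def X_def
    using outer_carrier[OF extraction(1)] outer_carrier[OF w] Rc by (intro eq_matI) auto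
  ultimately show ?thesis
    using extraction(1,2) unfolding X_def R'_def by blast
qed

lemma refl_mat_carrier: "refl_mat N v \<in> carrier_mat N N"
  unfolding refl_mat_def by auto

lemma chan_carrier:
  assumes "G \<in> carrier_mat N M" "hdir \<in> carrier_vec M" "hr \<in> carrier_vec N" "Phi \<in> carrier_mat N N"
  shows "chan G hdir hr Phi \<in> carrier_vec M"
  using assms mat_adjoint_carrier[OF assms(1)] mat_adjoint_carrier[OF assms(4)]
  unfolding chan_def by auto

definition tx_covariance :: "complex vec \<times> complex mat \<Rightarrow> complex mat" where
  "tx_covariance p = outer (fst p) + snd p"

lemma feas1_subset_feas2:
  assumes "chan G hdir hr Phi \<in> carrier_vec M" "sigma2 > 0"
  shows "feas1 M G hdir hr Gam sigma2 P0 Phi \<subseteq> feas2 M G hdir hr Gam sigma2 P0 Phi"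
proof clarify
  fix w R assume wR: "(w, R) \<in> feas1 M G hdir hr Gam sigma2 P0 Phi"
  then have "psd_mat M R" "Gam \<le> sinr1 (chan G hdir hr Phi) w R sigma2"
    unfolding feas1_def by auto
  moreover have "sinr1 (chan G hdir hr Phi) w R sigma2 \<le> sinr2 (chan G hdir hr Phi) w sigma2"
    using \<open>psd_mat M R\<close> assms unfolding sinr1_def sinr2_def psd_mat_def
    by (intro divide_left_mono) auto
  ultimately show "(w, R) \<in> feas2 M G hdir hr Gam sigma2 P0 Phi"
    using wR unfolding feas1_def feas2_def by auto
qed

lemma tx_covariance_feas1_eq_feas2:
  assumes h: "chan G hdir hr Phi \<in> carrier_vec M" and "sigma2 > 0" "Gam > 0"
  shows "tx_covariance ` feas1 M G hdir hr Gam sigma2 P0 Phi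
    = tx_covariance ` feas2 M G hdir hr Gam sigma2 P0 Phi"
proof
  show "tx_covariance ` feas1 M G hdir hr Gam sigma2 P0 Phi
    \<subseteq> tx_covariance ` feas2 M G hdir hr Gam sigma2 P0 Phi"
    using feas1_subset_feas2[OF h \<open>sigma2 > 0\<close>] by blast
next
  show "tx_covariance ` feas2 M G hdir hr Gam sigma2 P0 Phi
    \<subseteq> tx_covariance ` feas1 M G hdir hr Gam sigma2 P0 Phi"
  proof clarify
    fix w R assume "(w, R) \<in> feas2 M G hdir hr Gam sigma2 P0 Phi"
    then have wR: "w \<in> carrier_vec M" "psd_mat M R" "sinr2 (chan G hdir hr Phi) w sigma2 \<ge> Gam"
      "sqnorm w + Re (trace_mat R) \<le> P0"
      unfolding feas2_def by auto
    obtain w' R' where new: "w' \<in> carrier_vec M" "psd_mat M R'"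
      "sinr1 (chan G hdir hr Phi) w' R' sigma2 \<ge> Gam" "outer w' + R' = outer w + R"
      using interference_free_reallocation[OF h wR(1,2) assms(2,3) wR(3)] by blast
    have "sqnorm w' + Re (trace_mat R') = sqnorm w + Re (trace_mat R)"
      using new(1,2,4) wR(1,2) power_eq_trace_covariance
      unfolding psd_mat_iff_sesq_form hermitian_mat_def by metis
    then have "(w', R') \<in> feas1 M G hdir hr Gam sigma2 P0 Phi"
      using new wR(4) unfolding feas1_def by auto
    then show "tx_covariance (w, R) \<in> tx_covariance ` feas1 M G hdir hr Gam sigma2 P0 Phi"
      by (rule rev_image_eqI) (simp add: tx_covariance_def new(4))
  qed
qed

lemma val_P11_eq_val_P21:
  assumes "chan G hdir hr Phi \<in> carrier_vec M" "sigma2 > 0" "Gam > 0"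
  shows "val_P11 M G hdir hr Gam sigma2 P0 Phi = val_P21 M G hdir hr Gam sigma2 P0 Phi"
proof -
  have objective: "(INF p \<in> F. crb G (outer (fst p) + snd p)) = Inf (crb G ` tx_covariance ` F)" for F
    by (simp add: image_image tx_covariance_def)
  show ?thesis
    unfolding val_P11_def val_P21_def objective tx_covariance_feas1_eq_feas2[OF assms] ..
qed

lemma val_P1_eq_INF_val_P11:
  "val_P1 M N G hdir hr Gam sigma2 P0
    = (INF v \<in> {v. unimod N v}. val_P11 M G hdir hr Gam sigma2 P0 (refl_mat N v))"
  unfolding val_P1_def val_P11_def by (rule antisym) (auto intro!: INF_greatest INF_lower2)

lemma val_P2_eq_INF_val_P21:
  "val_P2 M N G hdir hr Gam sigma2 P0
    = (INF v \<in> {v. unimod N v}. val_P21 M G hdir hr Gam sigma2 P0 (refl_mat N v))"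
  unfolding val_P2_def val_P21_def by (rule antisym) (auto intro!: INF_greatest INF_lower2)

theorem proposition5:
  fixes M N :: nat and G :: "complex mat" and hdir hr :: "complex vec"
    and Gam sigma2 P0 :: real
  assumes "M \<ge> 1" "N \<ge> 1"
    and "G \<in> carrier_mat N M" "hdir \<in> carrier_vec M" "hr \<in> carrier_vec N"
    and "Gam > 0" "sigma2 > 0" "P0 > 0"
  shows "(\<forall>v. unimod N v \<and> sdr_has_opt M G hdir hr Gam sigma2 P0 (refl_mat N v) \<longrightarrow>
            val_P11 M G hdir hr Gam sigma2 P0 (refl_mat N v) = val_P21 M G hdir hr Gam sigma2 P0 (refl_mat N v))
       \<and> ((\<forall>v. unimod N v \<longrightarrow> sdr_has_opt M G hdir hr Gam sigma2 P0 (refl_mat N v)) \<longrightarrow>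
            val_P1 M N G hdir hr Gam sigma2 P0 = val_P2 M N G hdir hr Gam sigma2 P0)"
proof -
  have subproblems: "val_P11 M G hdir hr Gam sigma2 P0 (refl_mat N v)
      = val_P21 M G hdir hr Gam sigma2 P0 (refl_mat N v)" for v
    using val_P11_eq_val_P21 chan_carrier[OF assms(3-5) refl_mat_carrier] assms(6,7) by blast
  then show ?thesis
    unfolding val_P1_eq_INF_val_P11 val_P2_eq_INF_val_P21 by simp
qed

end
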